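(* Let $G\neq K_4$ be a connected, claw-free cubic graph all of whose units are triangle-units. Then there exists an independent set in $G$ that contains a vertex from every triangle of $G$.
   Context: A graph is claw-free if it has no induced subgraph isomorphic to $K_{1,3}$; it is cubic if every vertex has degree $3$. A diamond is an induced subgraph isomorphic to $K_4$ minus one edge. For a connected, claw-free, cubic graph $G\neq K_4$, the vertex set $V(G)$ can be uniquely partitioned into sets each of which induces a triangle or a diamond in $G$; the parts are called units, a triangle-unit being a part inducing a triangle and a diamond-unit a part inducing a diamond. *)

theory Defs
  imports Main
begin

definition simple_graph :: "'a set \<Rightarrow> ('a \<Rightarrow> 'a \<Rightarrow> bool) \<Rightarrow> bool" where
  "simple_graph V E \<longleftrightarrow> finite V \<and> (\<forall>x y. E x y \<longrightarrow> x \<in> V \<and> y \<in> V)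
     \<and> (\<forall>x y. E x y \<longrightarrow> E y x) \<and> (\<forall>x. \<not> E x x)"

definition connected_graph :: "'a set \<Rightarrow> ('a \<Rightarrow> 'a \<Rightarrow> bool) \<Rightarrow> bool" where
  "connected_graph V E \<longleftrightarrow> V \<noteq> {} \<and> (\<forall>x\<in>V. \<forall>y\<in>V. E\<^sup>*\<^sup>* x y)"

definition nbhd :: "'a set \<Rightarrow> ('a \<Rightarrow> 'a \<Rightarrow> bool) \<Rightarrow> 'a \<Rightarrow> 'a set" where
  "nbhd V E v = {u \<in> V. E v u}"

definition cubic :: "'a set \<Rightarrow> ('a \<Rightarrow> 'a \<Rightarrow> bool) \<Rightarrow> bool" where
  "cubic V E \<longleftrightarrow> (\<forall>v\<in>V. card (nbhd V E v) = 3)"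

definition claw_free :: "'a set \<Rightarrow> ('a \<Rightarrow> 'a \<Rightarrow> bool) \<Rightarrow> bool" where
  "claw_free V E \<longleftrightarrow> \<not> (\<exists>v\<in>V. \<exists>a b c. a \<in> nbhd V E v \<and> b \<in> nbhd V E v \<and> c \<in> nbhd V E v
      \<and> a \<noteq> b \<and> a \<noteq> c \<and> b \<noteq> c \<and> \<not> E a b \<and> \<not> E a c \<and> \<not> E b c)"

definition is_K4 :: "'a set \<Rightarrow> ('a \<Rightarrow> 'a \<Rightarrow> bool) \<Rightarrow> bool" where
  "is_K4 V E \<longleftrightarrow> card V = 4 \<and> (\<forall>x\<in>V. \<forall>y\<in>V. x \<noteq> y \<longrightarrow> E x y)"

definition induced_edges :: "('a \<Rightarrow> 'a \<Rightarrow> bool) \<Rightarrow> 'a set \<Rightarrow> 'a set set" where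
  "induced_edges E U = {{x, y} | x y. x \<in> U \<and> y \<in> U \<and> E x y}"

definition induces_triangle :: "('a \<Rightarrow> 'a \<Rightarrow> bool) \<Rightarrow> 'a set \<Rightarrow> bool" where
  "induces_triangle E U \<longleftrightarrow> card U = 3 \<and> (\<forall>x\<in>U. \<forall>y\<in>U. x \<noteq> y \<longrightarrow> E x y)"

text \<open>U induces a diamond, i.e. K4 minus one edge: 4 vertices, exactly 5 edges.\<close>
definition induces_diamond :: "('a \<Rightarrow> 'a \<Rightarrow> bool) \<Rightarrow> 'a set \<Rightarrow> bool" where
  "induces_diamond E U \<longleftrightarrow> card U = 4 \<and> card (induced_edges E U) = 5"

definition unit_partition :: "'a set \<Rightarrow> ('a \<Rightarrow> 'a \<Rightarrow> bool) \<Rightarrow> 'a set set \<Rightarrow> bool" where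
  "unit_partition V E P \<longleftrightarrow> \<Union>P = V \<and> (\<forall>A\<in>P. \<forall>B\<in>P. A \<noteq> B \<longrightarrow> A \<inter> B = {})
     \<and> (\<forall>U\<in>P. induces_triangle E U \<or> induces_diamond E U)"

definition independent_set :: "'a set \<Rightarrow> ('a \<Rightarrow> 'a \<Rightarrow> bool) \<Rightarrow> 'a set \<Rightarrow> bool" where
  "independent_set V E S \<longleftrightarrow> S \<subseteq> V \<and> (\<forall>x\<in>S. \<forall>y\<in>S. \<not> E x y)"

end

theory Submission
  imports Defs
begin

text \<open>Each vertex of a triangle of a cubic graph has exactly one neighbour outside that
triangle. Choose a root r farthest from some vertex; the edge rz leaving its triangle is then
not a bridge. Measure distances from r in the graph without rz, and in every triangle other
than the one of r choose the vertex closest to r. The neighbour outside the triangle of a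
chosen vertex is its predecessor on a shortest walk from r, hence strictly closer to r. So two
chosen vertices are never adjacent (each would be closer to r than the other), and no chosen
vertex is adjacent to r (that edge would be rz, which was deleted). Together with r the chosen
vertices form the independent set; every triangle is a triangle-unit, so it is met.\<close>

definition walk_dist :: "('a \<Rightarrow> 'a \<Rightarrow> bool) \<Rightarrow> 'a \<Rightarrow> 'a \<Rightarrow> nat" where
  "walk_dist R a b = (LEAST n. (R ^^ n) a b)"

lemma relpowp_walk_dist: "R\<^sup>*\<^sup>* a b \<Longrightarrow> (R ^^ walk_dist R a b) a b"
  unfolding walk_dist_def by (metis LeastI_ex rtranclp_imp_relpowp)

lemma walk_dist_le: "(R ^^ n) a b \<Longrightarrow> walk_dist R a b \<le> n"
  unfolding walk_dist_def by (rule Least_le)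

lemma walk_dist_predecessor:
  assumes "R\<^sup>*\<^sup>* a b" "a \<noteq> b"
  shows "\<exists>p. R p b \<and> walk_dist R a p < walk_dist R a b"
proof -
  obtain n where n: "walk_dist R a b = Suc n"
    using relpowp_walk_dist[OF assms(1)] assms(2) by (cases "walk_dist R a b") auto
  then have "(R ^^ Suc n) a b"
    using relpowp_walk_dist[OF assms(1)] by simp
  then obtain p where "(R ^^ n) a p" "R p b"
    by (rule relpowp_Suc_E)
  then show ?thesis
    using walk_dist_le n by fastforce
qed

lemma relpowp_avoiding:
  assumes "\<And>x y. R x y \<Longrightarrow> x \<noteq> v \<Longrightarrow> y \<noteq> v \<Longrightarrow> R' x y"
  shows "(R ^^ n) a u \<Longrightarrow> n \<le> walk_dist R a v \<Longrightarrow> u \<noteq> v \<Longrightarrow> (R' ^^ n) a u"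
proof (induction n arbitrary: u)
  case 0
  then show ?case by simp
next
  case (Suc n)
  from Suc.prems(1) obtain w where w: "(R ^^ n) a w" "R w u"
    by (rule relpowp_Suc_E)
  have "w \<noteq> v"
    using walk_dist_le[OF w(1)] Suc.prems(2) by auto
  then have "(R' ^^ n) a w" and "R' w u"
    using Suc w assms by simp_all
  then show ?case by auto
qed

definition delete_edge :: "('a \<Rightarrow> 'a \<Rightarrow> bool) \<Rightarrow> 'a \<Rightarrow> 'a \<Rightarrow> 'a \<Rightarrow> 'a \<Rightarrow> bool" where
  "delete_edge R v z a b \<longleftrightarrow> R a b \<and> {a, b} \<noteq> {v, z}"

lemma symp_delete_edge: "symp R \<Longrightarrow> symp (delete_edge R v z)"
  unfolding delete_edge_def by (auto simp: insert_commute dest: sympD intro: sympI)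

lemma reachable_delete_edge_at_farthest:
  assumes "symp R" and reach: "\<And>u. u \<in> V \<Longrightarrow> R\<^sup>*\<^sup>* x0 u"
    and far: "\<And>u. u \<in> V \<Longrightarrow> walk_dist R x0 u \<le> walk_dist R x0 v"
    and m: "m \<in> V" "R v m" "m \<noteq> v" "m \<noteq> z" and "u \<in> V"
  shows "(delete_edge R v z)\<^sup>*\<^sup>* v u"
proof -
  let ?R' = "delete_edge R v z"
  \<comment> \<open>Since v is farthest from x0, shortest walks to other vertices never pass through v.\<close>
  have avoiding_v: "?R'\<^sup>*\<^sup>* x0 w" if "w \<in> V" "w \<noteq> v" for w
  proof -
    have "(?R' ^^ walk_dist R x0 w) x0 w"
      by (rule relpowp_avoiding[of R v])
        (use relpowp_walk_dist[OF reach] far that in \<open>auto simp: delete_edge_def doubleton_eq_iff\<close>)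
    then show ?thesis by (rule relpowp_imp_rtranclp)
  qed
  have "?R' m v"
    using m \<open>symp R\<close> by (auto simp: delete_edge_def doubleton_eq_iff dest: sympD)
  then have "?R'\<^sup>*\<^sup>* x0 v"
    using avoiding_v[OF m(1,3)] by simp
  then have "?R'\<^sup>*\<^sup>* v x0"
    using symp_rtranclp[OF symp_delete_edge[OF \<open>symp R\<close>]] by (auto dest: sympD)
  moreover have "?R'\<^sup>*\<^sup>* x0 u"
    using avoiding_v \<open>?R'\<^sup>*\<^sup>* x0 v\<close> \<open>u \<in> V\<close> by (cases "u = v") auto
  ultimately show ?thesis by simp
qed

definition closest :: "('a \<Rightarrow> 'a \<Rightarrow> bool) \<Rightarrow> 'a \<Rightarrow> 'a set \<Rightarrow> 'a" where
  "closest R r W = arg_min (walk_dist R r) (\<lambda>w. w \<in> W)"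

lemma closest_in: "w \<in> W \<Longrightarrow> closest R r W \<in> W"
  unfolding closest_def by (rule arg_min_natI)

lemma walk_dist_closest_le: "w \<in> W \<Longrightarrow> walk_dist R r (closest R r W) \<le> walk_dist R r w"
  unfolding closest_def by (rule arg_min_nat_le)

lemma closest_entered_from_outside:
  assumes "R\<^sup>*\<^sup>* r (closest R r W)" "r \<notin> W" "w \<in> W"
  shows "\<exists>p. R p (closest R r W) \<and> p \<notin> W \<and> walk_dist R r p < walk_dist R r (closest R r W)"
proof -
  have "r \<noteq> closest R r W"
    using closest_in[of w W R r] assms(2,3) by auto
  then obtain p where p: "R p (closest R r W)" "walk_dist R r p < walk_dist R r (closest R r W)"
    using walk_dist_predecessor[OF assms(1)] by blast
  moreover have "p \<notin> W"
    using walk_dist_closest_le[of p W R r] p(2) by auto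
  ultimately show ?thesis by blast
qed

context
  fixes E E' :: "'a \<Rightarrow> 'a \<Rightarrow> bool" and P :: "'a set set" and r z :: 'a and Ur :: "'a set"
  assumes E_sym: "symp E" and E_irrefl: "\<And>x. \<not> E x x"
    and disjoint: "\<And>A B. A \<in> P \<Longrightarrow> B \<in> P \<Longrightarrow> A \<noteq> B \<Longrightarrow> A \<inter> B = {}"
    and nonempty: "{} \<notin> P"
    and exit_unique: "\<And>W x a b. W \<in> P \<Longrightarrow> x \<in> W \<Longrightarrow> E x a \<Longrightarrow> E x b \<Longrightarrow> a \<notin> W \<Longrightarrow> b \<notin> W \<Longrightarrow> a = b"
    and subrel: "\<And>x y. E' x y \<Longrightarrow> E x y"
    and reach: "\<And>u. u \<in> \<Union>P \<Longrightarrow> E'\<^sup>*\<^sup>* r u"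
    and root: "Ur \<in> P" "r \<in> Ur" "E r z" "z \<notin> Ur" "\<not> E' r z"
begin

lemma closest_in_part:
  assumes "W \<in> P"
  shows "closest E' r W \<in> W"
proof -
  obtain w where "w \<in> W"
    using assms nonempty by (metis all_not_in_conv)
  then show ?thesis
    by (rule closest_in)
qed

lemma closest_exit_is_predecessor:
  assumes W: "W \<in> P" "W \<noteq> Ur" and "E (closest E' r W) y" "y \<notin> W"
  shows "E' y (closest E' r W) \<and> walk_dist E' r y < walk_dist E' r (closest E' r W)"
proof -
  have "r \<notin> W"
    using W root disjoint by blast
  moreover have "closest E' r W \<in> \<Union>P"
    using W(1) closest_in_part by blast
  ultimately obtain p where p: "E' p (closest E' r W)" "p \<notin> W"
      "walk_dist E' r p < walk_dist E' r (closest E' r W)"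
    using closest_entered_from_outside[OF reach _ closest_in_part[OF W(1)]] by blast
  have "E (closest E' r W) p"
    using sympD[OF E_sym subrel[OF p(1)]] .
  then have "p = y"
    using exit_unique[OF W(1) closest_in_part[OF W(1)]] p(2) assms(3,4) by blast
  then show ?thesis using p by simp
qed

lemma root_not_adjacent_closest:
  assumes W: "W \<in> P" "W \<noteq> Ur"
  shows "\<not> E r (closest E' r W)"
proof
  assume adj: "E r (closest E' r W)"
  have "r \<notin> W" "closest E' r W \<notin> Ur"
    using W root disjoint closest_in_part by blast+
  have "E' r (closest E' r W)"
    using closest_exit_is_predecessor[OF W sympD[OF E_sym adj] \<open>r \<notin> W\<close>] by simp
  moreover have "closest E' r W = z"
    using exit_unique[OF root(1,2) adj root(3) \<open>closest E' r W \<notin> Ur\<close> root(4)] .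
  ultimately show False
    using root(5) by simp
qed

lemma closest_not_adjacent:
  assumes W1: "W1 \<in> P" "W1 \<noteq> Ur" and W2: "W2 \<in> P" "W2 \<noteq> Ur" and "W1 \<noteq> W2"
  shows "\<not> E (closest E' r W1) (closest E' r W2)"
proof
  assume adj: "E (closest E' r W1) (closest E' r W2)"
  have "closest E' r W2 \<notin> W1" "closest E' r W1 \<notin> W2"
    using assms disjoint closest_in_part by blast+
  then have "walk_dist E' r (closest E' r W2) < walk_dist E' r (closest E' r W1)"
    and "walk_dist E' r (closest E' r W1) < walk_dist E' r (closest E' r W2)"
    using closest_exit_is_predecessor[OF W1 adj] closest_exit_is_predecessor[OF W2 sympD[OF E_sym adj]]
    by simp_all
  then show False
    by simp
qed

lemma independent_transversal:
  "\<exists>S \<subseteq> \<Union>P. (\<forall>x\<in>S. \<forall>y\<in>S. \<not> E x y) \<and> (\<forall>W\<in>P. S \<inter> W \<noteq> {})"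
proof (intro exI conjI)
  let ?S = "insert r (closest E' r ` (P - {Ur}))"
  show "?S \<subseteq> \<Union>P"
    using root closest_in_part by blast
  have "\<not> E (closest E' r W) r" if "W \<in> P" "W \<noteq> Ur" for W
    using root_not_adjacent_closest[OF that] E_sym by (meson sympD)
  then show "\<forall>x\<in>?S. \<forall>y\<in>?S. \<not> E x y"
    using E_irrefl root_not_adjacent_closest closest_not_adjacent by blast
  have "?S \<inter> W \<noteq> {}" if "W \<in> P" for W
    using that root closest_in_part by (cases "W = Ur") auto
  then show "\<forall>W\<in>P. ?S \<inter> W \<noteq> {}"
    by blast
qed

end

lemma cubic_triangle_one_exit:
  assumes G: "simple_graph V E" "cubic V E" and T: "T \<subseteq> V" "induces_triangle E T" "x \<in> T"
  shows "card (nbhd V E x - T) = 1"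
proof -
  have sub: "T - {x} \<subseteq> nbhd V E x"
    using T unfolding nbhd_def induces_triangle_def by auto
  have "x \<notin> nbhd V E x"
    using G(1) unfolding nbhd_def simple_graph_def by auto
  then have "nbhd V E x - T = nbhd V E x - (T - {x})"
    by auto
  moreover have "finite (nbhd V E x)"
    using G(1) unfolding simple_graph_def nbhd_def by auto
  moreover have "card (nbhd V E x) = 3"
    using G(2) T unfolding cubic_def by auto
  moreover have "card (T - {x}) = 2"
    using T(2,3) unfolding induces_triangle_def by (simp add: card_gt_0_iff)
  ultimately show ?thesis
    using card_Diff_subset[OF finite_subset[OF sub] sub] by simp
qed

lemma cubic_triangle_exit_unique:
  assumes G: "simple_graph V E" "cubic V E" and T: "T \<subseteq> V" "induces_triangle E T" "x \<in> T"
    and "E x a" "E x b" "a \<notin> T" "b \<notin> T"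
  shows "a = b"
proof -
  obtain c where "nbhd V E x - T = {c}"
    using cubic_triangle_one_exit[OF G T] by (rule card_1_singletonE)
  moreover have "a \<in> nbhd V E x - T" "b \<in> nbhd V E x - T"
    using assms G(1) unfolding nbhd_def simple_graph_def by auto
  ultimately show ?thesis
    by simp
qed

lemma cubic_triangle_exit_exists:
  assumes G: "simple_graph V E" "cubic V E" and T: "T \<subseteq> V" "induces_triangle E T" "x \<in> T"
  shows "\<exists>a. E x a \<and> a \<notin> T"
proof -
  obtain a where "nbhd V E x - T = {a}"
    using cubic_triangle_one_exit[OF G T] by (rule card_1_singletonE)
  then show ?thesis
    unfolding nbhd_def by auto
qed

lemma triangle_partition_exit_unique:
  assumes G: "simple_graph V E" "cubic V E"
    and part: "unit_partition V E P" and tri: "\<forall>U\<in>P. induces_triangle E U"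
    and "U \<in> P" "x \<in> U" "E x a" "E x b" "a \<notin> U" "b \<notin> U"
  shows "a = b"
proof -
  have "U \<subseteq> V"
    using part \<open>U \<in> P\<close> unfolding unit_partition_def by blast
  then show ?thesis
    using cubic_triangle_exit_unique[OF G] tri assms(5-) by blast
qed

lemma triangle_subset_part:
  assumes cover: "\<Union>P = V" and disjoint: "\<forall>A\<in>P. \<forall>B\<in>P. A \<noteq> B \<longrightarrow> A \<inter> B = {}"
    and exit_unique: "\<And>U x a b. U \<in> P \<Longrightarrow> x \<in> U \<Longrightarrow> E x a \<Longrightarrow> E x b \<Longrightarrow> a \<notin> U \<Longrightarrow> b \<notin> U \<Longrightarrow> a = b"
    and T: "T \<subseteq> V" "induces_triangle E T"
  shows "\<exists>U\<in>P. T \<subseteq> U"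
proof -
  obtain a b c where abc: "T = {a, b, c}" "a \<noteq> b" "b \<noteq> c" "a \<noteq> c"
    using T(2) unfolding induces_triangle_def card_3_iff by blast
  have same_part: "A = B" if "A \<in> P" "B \<in> P" "x \<in> A" "x \<in> B" for A B x
    using disjoint that by blast
  have shares_part: "\<exists>U\<in>P. x \<in> U \<and> (y \<in> U \<or> y' \<in> U)"
    if xyy: "x \<in> T" "y \<in> T" "y' \<in> T" "y \<noteq> y'" "x \<noteq> y" "x \<noteq> y'" for x y y'
  proof -
    obtain U where U: "U \<in> P" "x \<in> U"
      using cover T(1) xyy(1) by blast
    moreover have "E x y" "E x y'"
      using T(2) xyy unfolding induces_triangle_def by auto
    ultimately show ?thesis
      using exit_unique[OF U] xyy(4) by blast
  qed
  obtain Ua where Ua: "Ua \<in> P" "a \<in> Ua" "b \<in> Ua \<or> c \<in> Ua"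
    using shares_part[of a b c] abc by auto
  have "b \<in> Ua \<and> c \<in> Ua"
  proof (cases "b \<in> Ua")
    case True
    obtain Uc where "Uc \<in> P" "c \<in> Uc" "a \<in> Uc \<or> b \<in> Uc"
      using shares_part[of c a b] abc by auto
    then show ?thesis
      using True Ua same_part by metis
  next
    case False
    obtain Ub where "Ub \<in> P" "b \<in> Ub" "a \<in> Ub \<or> c \<in> Ub"
      using shares_part[of b a c] abc by auto
    then show ?thesis
      using False Ua same_part by metis
  qed
  then show ?thesis
    using abc(1) Ua(1,2) by blast
qed

lemma triangle_mem_partition:
  assumes G: "simple_graph V E" "cubic V E"
    and part: "unit_partition V E P" and tri: "\<forall>U\<in>P. induces_triangle E U"
    and T: "T \<subseteq> V" "induces_triangle E T"
  shows "T \<in> P"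
proof -
  have cover: "\<Union>P = V" and disjoint: "\<forall>A\<in>P. \<forall>B\<in>P. A \<noteq> B \<longrightarrow> A \<inter> B = {}"
    using part unfolding unit_partition_def by simp_all
  have "\<exists>U\<in>P. T \<subseteq> U"
    using cover disjoint triangle_partition_exit_unique[OF G part tri] T
    by (intro triangle_subset_part)
  then obtain U where "U \<in> P" "T \<subseteq> U"
    by blast
  moreover have "card U = 3" "card T = 3"
    using tri \<open>U \<in> P\<close> T(2) unfolding induces_triangle_def by auto
  ultimately show ?thesis
    by (metis card_subset_eq card.infinite zero_neq_numeral)
qed

lemma exists_triangle_exit_not_bridge:
  assumes G: "simple_graph V E" "connected_graph V E" "cubic V E"
    and in_triangle: "\<And>v. v \<in> V \<Longrightarrow> \<exists>T\<subseteq>V. induces_triangle E T \<and> v \<in> T"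
  shows "\<exists>T v z. T \<subseteq> V \<and> induces_triangle E T \<and> v \<in> T \<and> E v z \<and> z \<notin> T
           \<and> (\<forall>u\<in>V. (delete_edge E v z)\<^sup>*\<^sup>* v u)"
proof -
  obtain x0 where "x0 \<in> V"
    using G(2) unfolding connected_graph_def by auto
  then have reach: "\<And>u. u \<in> V \<Longrightarrow> E\<^sup>*\<^sup>* x0 u"
    using G(2) unfolding connected_graph_def by auto
  have "finite V"
    using G(1) unfolding simple_graph_def by simp
  then have "Max (walk_dist E x0 ` V) \<in> walk_dist E x0 ` V"
    using \<open>x0 \<in> V\<close> by (intro Max_in) auto
  then obtain v where "v \<in> V" "Max (walk_dist E x0 ` V) = walk_dist E x0 v"
    by blast
  then have far: "\<And>u. u \<in> V \<Longrightarrow> walk_dist E x0 u \<le> walk_dist E x0 v"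
    using \<open>finite V\<close> by (metis Max_ge finite_imageI imageI)
  obtain T where T: "T \<subseteq> V" "induces_triangle E T" "v \<in> T"
    using in_triangle[OF \<open>v \<in> V\<close>] by blast
  obtain z where z: "E v z" "z \<notin> T"
    using cubic_triangle_exit_exists[OF G(1,3) T] by blast
  have "\<not> T \<subseteq> {v}"
    using T(2) card_mono[of "{v}" T] unfolding induces_triangle_def by auto
  then obtain m where m: "m \<in> T" "m \<noteq> v"
    by blast
  have "m \<in> V" "E v m" "m \<noteq> z"
    using T m z(2) unfolding induces_triangle_def by auto
  moreover have "symp E"
    using G(1) unfolding simple_graph_def by (auto intro: sympI)
  ultimately have "\<forall>u\<in>V. (delete_edge E v z)\<^sup>*\<^sup>* v u"
    using reachable_delete_edge_at_farthest[OF _ reach far] m(2) by blast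
  then show ?thesis
    using T z by blast
qed

lemma triangle_partition_independent_transversal:
  assumes G: "simple_graph V E" "connected_graph V E" "cubic V E"
    and part: "unit_partition V E P" and tri: "\<forall>U\<in>P. induces_triangle E U"
  shows "\<exists>S. independent_set V E S \<and> (\<forall>W\<in>P. S \<inter> W \<noteq> {})"
proof -
  have cover: "\<Union>P = V" and disjoint: "\<And>A B. A \<in> P \<Longrightarrow> B \<in> P \<Longrightarrow> A \<noteq> B \<Longrightarrow> A \<inter> B = {}"
    using part unfolding unit_partition_def by simp_all
  have "{} \<notin> P"
    using tri unfolding induces_triangle_def by force
  have "symp E" "\<And>x. \<not> E x x"
    using G(1) unfolding simple_graph_def by (auto intro: sympI)
  obtain Ur r z where "Ur \<subseteq> V" "induces_triangle E Ur" "r \<in> Ur" "E r z" "z \<notin> Ur"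
    and reach: "\<forall>u\<in>V. (delete_edge E r z)\<^sup>*\<^sup>* r u"
    using exists_triangle_exit_not_bridge[OF G] cover tri by blast
  then have "Ur \<in> P"
    using triangle_mem_partition[OF G(1,3) part tri] by blast
  have sub: "delete_edge E r z x y \<Longrightarrow> E x y" for x y
    by (simp add: delete_edge_def)
  have reach': "u \<in> \<Union>P \<Longrightarrow> (delete_edge E r z)\<^sup>*\<^sup>* r u" for u
    using reach cover by blast
  have "\<not> delete_edge E r z r z"
    by (simp add: delete_edge_def)
  then have "\<exists>S\<subseteq>\<Union>P. (\<forall>x\<in>S. \<forall>y\<in>S. \<not> E x y) \<and> (\<forall>W\<in>P. S \<inter> W \<noteq> {})"
    using \<open>symp E\<close> \<open>\<And>x. \<not> E x x\<close> disjoint \<open>{} \<notin> P\<close>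
      triangle_partition_exit_unique[OF G(1,3) part tri]
      sub reach' \<open>Ur \<in> P\<close> \<open>r \<in> Ur\<close> \<open>E r z\<close> \<open>z \<notin> Ur\<close>
    by (intro independent_transversal[where E' = "delete_edge E r z" and Ur = Ur and z = z])
  then show ?thesis
    unfolding independent_set_def cover by blast
qed

theorem lemma3p9:
  fixes V :: "'a set" and E :: "'a \<Rightarrow> 'a \<Rightarrow> bool"
  assumes "simple_graph V E"
    and "connected_graph V E"
    and "claw_free V E"
    and "cubic V E"
    and "\<not> is_K4 V E"
    and "\<exists>P. unit_partition V E P \<and> (\<forall>U\<in>P. induces_triangle E U)"
  shows "\<exists>S. independent_set V E S \<and>
           (\<forall>T. T \<subseteq> V \<and> induces_triangle E T \<longrightarrow> S \<inter> T \<noteq> {})"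
proof -
  obtain P where part: "unit_partition V E P" and tri: "\<forall>U\<in>P. induces_triangle E U"
    using assms(6) by blast
  obtain S where "independent_set V E S" "\<forall>W\<in>P. S \<inter> W \<noteq> {}"
    using triangle_partition_independent_transversal[OF assms(1,2,4) part tri] by blast
  moreover have "T \<in> P" if "T \<subseteq> V" "induces_triangle E T" for T
    using triangle_mem_partition[OF assms(1,4) part tri that] .
  ultimately show ?thesis
    by blast
qed

end
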